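(* Let $k,l\ge1$ with $k\ne l$, and let $r$ be an odd integer with $1\le r\le 4kl$. Then the set $\overline{\mathcal{B}}(2k,2l;r)$ contains exactly one board from each equivalence class of $\mathcal{B}(2k,2l;r)$ under $\langle H,V\rangle$.
   Context: A $2k\times 2l$ grid ($2k$ rows top to bottom, $2l$ columns left to right); $\mathcal{B}(2k,2l;r)$ is the set of boards, i.e. subsets of exactly $r$ blocked cells. $\langle H,V\rangle=\{R_0,H,V,R_{180}\}$ ($H$, $V$ reflections across the horizontal and vertical midlines, $R_{180}$ the 180-degree rotation) acts on boards; two boards are equivalent if one is mapped to the other. Quadrants: $Q_1$ = rows $1..k$, cols $1..l$; $Q_2$ = rows $1..k$, cols $l+1..2l$; $Q_3$ = rows $k+1..2k$, cols $l+1..2l$; $Q_4$ = rows $k+1..2k$, cols $1..l$; the board partition is $(\lambda_1,\lambda_2,\lambda_3,\lambda_4)$ with $\lambda_i$ the number of blocked cells in $Q_i$. $\overline{\mathcal{B}}(2k,2l;r)$ is the set of boards in $\mathcal{B}(2k,2l;r)$ whose board partition satisfies: $\lambda_1\ge\lambda_i$ for all $i>1$; if $\lambda_1=\lambda_2$ then $\lambda_3\ge\lambda_4$; if $\lambda_1=\lambda_3$ then $\lambda_2\ge\lambda_4$; if $\lambda_1=\lambda_4$ then $\lambda_2\ge\lambda_3$. *)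

theory Defs
  imports Main
begin

text \<open>Cells are pairs (row, column) with rows 1..2k (top to bottom) and columns 1..2l.\<close>

definition cells :: "nat \<Rightarrow> nat \<Rightarrow> (nat \<times> nat) set" where
  "cells k l = {1..2*k} \<times> {1..2*l}"

definition boards :: "nat \<Rightarrow> nat \<Rightarrow> nat \<Rightarrow> (nat \<times> nat) set set" where
  "boards k l r = {B. B \<subseteq> cells k l \<and> card B = r}"

definition reflH :: "nat \<Rightarrow> nat \<Rightarrow> nat \<times> nat \<Rightarrow> nat \<times> nat" where
  "reflH k l = (\<lambda>(i, j). (2*k + 1 - i, j))"

definition reflV :: "nat \<Rightarrow> nat \<Rightarrow> nat \<times> nat \<Rightarrow> nat \<times> nat" where
  "reflV k l = (\<lambda>(i, j). (i, 2*l + 1 - j))"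

definition rot180 :: "nat \<Rightarrow> nat \<Rightarrow> nat \<times> nat \<Rightarrow> nat \<times> nat" where
  "rot180 k l = (\<lambda>(i, j). (2*k + 1 - i, 2*l + 1 - j))"

definition HV_group :: "nat \<Rightarrow> nat \<Rightarrow> (nat \<times> nat \<Rightarrow> nat \<times> nat) set" where
  "HV_group k l = {id, reflH k l, reflV k l, rot180 k l}"

definition board_equiv :: "nat \<Rightarrow> nat \<Rightarrow> (nat \<times> nat) set \<Rightarrow> (nat \<times> nat) set \<Rightarrow> bool" where
  "board_equiv k l B B' \<longleftrightarrow> (\<exists>g \<in> HV_group k l. g ` B = B')"

definition lam1 :: "nat \<Rightarrow> nat \<Rightarrow> (nat \<times> nat) set \<Rightarrow> nat" where
  "lam1 k l B = card {(i, j) \<in> B. 1 \<le> i \<and> i \<le> k \<and> 1 \<le> j \<and> j \<le> l}"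
definition lam2 :: "nat \<Rightarrow> nat \<Rightarrow> (nat \<times> nat) set \<Rightarrow> nat" where
  "lam2 k l B = card {(i, j) \<in> B. 1 \<le> i \<and> i \<le> k \<and> l + 1 \<le> j \<and> j \<le> 2*l}"
definition lam3 :: "nat \<Rightarrow> nat \<Rightarrow> (nat \<times> nat) set \<Rightarrow> nat" where
  "lam3 k l B = card {(i, j) \<in> B. k + 1 \<le> i \<and> i \<le> 2*k \<and> l + 1 \<le> j \<and> j \<le> 2*l}"
definition lam4 :: "nat \<Rightarrow> nat \<Rightarrow> (nat \<times> nat) set \<Rightarrow> nat" where
  "lam4 k l B = card {(i, j) \<in> B. k + 1 \<le> i \<and> i \<le> 2*k \<and> 1 \<le> j \<and> j \<le> l}"

definition boards_bar :: "nat \<Rightarrow> nat \<Rightarrow> nat \<Rightarrow> (nat \<times> nat) set set" where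
  "boards_bar k l r = {B \<in> boards k l r.
     let a1 = lam1 k l B; a2 = lam2 k l B; a3 = lam3 k l B; a4 = lam4 k l B in
       a1 \<ge> a2 \<and> a1 \<ge> a3 \<and> a1 \<ge> a4 \<and>
       (a1 = a2 \<longrightarrow> a3 \<ge> a4) \<and>
       (a1 = a3 \<longrightarrow> a2 \<ge> a4) \<and>
       (a1 = a4 \<longrightarrow> a2 \<ge> a3)}"

end

theory Submission
  imports Defs
begin

text \<open>The symmetries \<open>H\<close>, \<open>V\<close>, \<open>R\<^sub>1\<^sub>8\<^sub>0\<close> permute the quadrant counts
  \<open>(\<lambda>\<^sub>1,\<lambda>\<^sub>2,\<lambda>\<^sub>3,\<lambda>\<^sub>4)\<close> by the three double transpositions \<open>(14)(23)\<close>, \<open>(12)(34)\<close>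
  and \<open>(13)(24)\<close>. A count vector fixed by one of them would have an even sum, so for odd \<open>r\<close>
  the four boards of an orbit have four distinct count vectors, and a case analysis on the
  position of the largest count shows that exactly one of these four vectors satisfies the
  defining conditions of \<open>\<overline>\<B>(2k,2l;r)\<close>.\<close>

lemma card_image_Int_eq:
  assumes "inj_on g C" "B \<subseteq> C" "\<And>x. x \<in> C \<Longrightarrow> g x \<in> Q \<longleftrightarrow> x \<in> P"
  shows "card (g ` B \<inter> Q) = card (B \<inter> P)"
proof -
  have "g ` B \<inter> Q = g ` (B \<inter> P)"
    using assms(2,3) by blast
  moreover have "inj_on g (B \<inter> P)"
    using assms(2) by (intro inj_on_subset[OF assms(1)]) blast
  ultimately show ?thesis
    by (simp add: card_image)
qed

definition quadrant1 :: "nat \<Rightarrow> nat \<Rightarrow> (nat \<times> nat) set" where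
  "quadrant1 k l = {1..k} \<times> {1..l}"
definition quadrant2 :: "nat \<Rightarrow> nat \<Rightarrow> (nat \<times> nat) set" where
  "quadrant2 k l = {1..k} \<times> {l+1..2*l}"
definition quadrant3 :: "nat \<Rightarrow> nat \<Rightarrow> (nat \<times> nat) set" where
  "quadrant3 k l = {k+1..2*k} \<times> {l+1..2*l}"
definition quadrant4 :: "nat \<Rightarrow> nat \<Rightarrow> (nat \<times> nat) set" where
  "quadrant4 k l = {k+1..2*k} \<times> {1..l}"

lemmas quadrant_defs = quadrant1_def quadrant2_def quadrant3_def quadrant4_def

lemma lam1_eq_card_Int: "lam1 k l B = card (B \<inter> quadrant1 k l)"
  unfolding lam1_def quadrant1_def by (rule arg_cong[where f = card]) auto
lemma lam2_eq_card_Int: "lam2 k l B = card (B \<inter> quadrant2 k l)"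
  unfolding lam2_def quadrant2_def by (rule arg_cong[where f = card]) auto
lemma lam3_eq_card_Int: "lam3 k l B = card (B \<inter> quadrant3 k l)"
  unfolding lam3_def quadrant3_def by (rule arg_cong[where f = card]) auto
lemma lam4_eq_card_Int: "lam4 k l B = card (B \<inter> quadrant4 k l)"
  unfolding lam4_def quadrant4_def by (rule arg_cong[where f = card]) auto

lemmas lam_eq_card_Int =
  lam1_eq_card_Int lam2_eq_card_Int lam3_eq_card_Int lam4_eq_card_Int

lemma lam_sum_eq_card:
  assumes "B \<subseteq> cells k l"
  shows "lam1 k l B + lam2 k l B + lam3 k l B + lam4 k l B = card B"
proof -
  have "finite B"
    using assms finite_subset unfolding cells_def by blast
  have "card B = card (B \<inter> quadrant1 k l \<union> B \<inter> quadrant2 k l \<union> B \<inter> quadrant3 k l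
                        \<union> B \<inter> quadrant4 k l)"
    using assms unfolding cells_def quadrant_defs by (intro arg_cong[where f = card]) fastforce
  also have "\<dots> = card (B \<inter> quadrant1 k l) + card (B \<inter> quadrant2 k l)
                 + card (B \<inter> quadrant3 k l) + card (B \<inter> quadrant4 k l)"
    using \<open>finite B\<close> by (subst card_Un_disjoint; auto simp: quadrant_defs)+
  finally show ?thesis
    unfolding lam_eq_card_Int by simp
qed

lemma HV_group_inj_on_cells:
  assumes "g \<in> HV_group k l"
  shows "inj_on g (cells k l)"
  using assms unfolding HV_group_def inj_on_def reflH_def reflV_def rot180_def cells_def
  by (auto; arith)

lemma HV_group_image_cells:
  assumes "g \<in> HV_group k l"
  shows "g ` cells k l \<subseteq> cells k l"
  using assms unfolding HV_group_def reflH_def reflV_def rot180_def cells_def by auto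

lemma HV_group_image_boards:
  assumes "g \<in> HV_group k l" "B \<in> boards k l r"
  shows "g ` B \<in> boards k l r"
proof -
  have "inj_on g B"
    using assms(2) unfolding boards_def
    by (intro inj_on_subset[OF HV_group_inj_on_cells[OF assms(1)]]) blast
  then show ?thesis
    using assms(2) image_mono[of B "cells k l" g] HV_group_image_cells[OF assms(1)]
    unfolding boards_def by (simp add: card_image)
qed

lemma reflH_in_HV_group: "reflH k l \<in> HV_group k l"
  and reflV_in_HV_group: "reflV k l \<in> HV_group k l"
  and rot180_in_HV_group: "rot180 k l \<in> HV_group k l"
  unfolding HV_group_def by simp_all

lemma board_equiv_iff:
  "board_equiv k l B B' \<longleftrightarrow>
     B' = B \<or> B' = reflH k l ` B \<or> B' = reflV k l ` B \<or> B' = rot180 k l ` B"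
  unfolding board_equiv_def HV_group_def by auto

lemma lam_reflH:
  assumes "B \<subseteq> cells k l"
  shows "lam1 k l (reflH k l ` B) = lam4 k l B" "lam2 k l (reflH k l ` B) = lam3 k l B"
    "lam3 k l (reflH k l ` B) = lam2 k l B" "lam4 k l (reflH k l ` B) = lam1 k l B"
  unfolding lam_eq_card_Int
  by (rule card_image_Int_eq[OF HV_group_inj_on_cells[OF reflH_in_HV_group] assms];
      auto simp: reflH_def cells_def quadrant_defs)+

lemma lam_reflV:
  assumes "B \<subseteq> cells k l"
  shows "lam1 k l (reflV k l ` B) = lam2 k l B" "lam2 k l (reflV k l ` B) = lam1 k l B"
    "lam3 k l (reflV k l ` B) = lam4 k l B" "lam4 k l (reflV k l ` B) = lam3 k l B"
  unfolding lam_eq_card_Int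
  by (rule card_image_Int_eq[OF HV_group_inj_on_cells[OF reflV_in_HV_group] assms];
      auto simp: reflV_def cells_def quadrant_defs)+

lemma lam_rot180:
  assumes "B \<subseteq> cells k l"
  shows "lam1 k l (rot180 k l ` B) = lam3 k l B" "lam2 k l (rot180 k l ` B) = lam4 k l B"
    "lam3 k l (rot180 k l ` B) = lam1 k l B" "lam4 k l (rot180 k l ` B) = lam2 k l B"
  unfolding lam_eq_card_Int
  by (rule card_image_Int_eq[OF HV_group_inj_on_cells[OF rot180_in_HV_group] assms];
      auto simp: rot180_def cells_def quadrant_defs)+

definition canonical_partition :: "nat \<Rightarrow> nat \<Rightarrow> nat \<Rightarrow> nat \<Rightarrow> bool" where
  "canonical_partition a1 a2 a3 a4 \<longleftrightarrow> a1 \<ge> a2 \<and> a1 \<ge> a3 \<and> a1 \<ge> a4 \<and>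
     (a1 = a2 \<longrightarrow> a3 \<ge> a4) \<and> (a1 = a3 \<longrightarrow> a2 \<ge> a4) \<and> (a1 = a4 \<longrightarrow> a2 \<ge> a3)"

lemma boards_bar_iff:
  "B \<in> boards_bar k l r \<longleftrightarrow>
     B \<in> boards k l r \<and> canonical_partition (lam1 k l B) (lam2 k l B) (lam3 k l B) (lam4 k l B)"
  unfolding boards_bar_def canonical_partition_def Let_def by simp

lemma ex_canonical_permutation:
  "canonical_partition a b c d \<or> canonical_partition d c b a \<or>
         canonical_partition b a d c \<or> canonical_partition c d a b"
  unfolding canonical_partition_def
  by (cases "a \<le> b"; cases "a \<le> c"; cases "a \<le> d"; cases "b \<le> c"; cases "b \<le> d";
      cases "c \<le> d"; auto)

lemma odd_sum_canonical_permutations_exclusive: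
  assumes "odd (a + b + c + d)"
  shows "\<not> (canonical_partition a b c d \<and> canonical_partition d c b a)"
    "\<not> (canonical_partition a b c d \<and> canonical_partition b a d c)"
    "\<not> (canonical_partition a b c d \<and> canonical_partition c d a b)"
    "\<not> (canonical_partition d c b a \<and> canonical_partition b a d c)"
    "\<not> (canonical_partition d c b a \<and> canonical_partition c d a b)"
    "\<not> (canonical_partition b a d c \<and> canonical_partition c d a b)"
  using assms unfolding canonical_partition_def by auto

theorem proposition7p2:
  fixes k l r :: nat
  assumes "k \<ge> 1" and "l \<ge> 1" and "k \<noteq> l"
    and "odd r" and "1 \<le> r" and "r \<le> 4 * k * l"
  shows "\<forall>B \<in> boards k l r. \<exists>!B'. B' \<in> boards_bar k l r \<and> board_equiv k l B B'"
proof
  fix B assume B: "B \<in> boards k l r"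
  then have "B \<subseteq> cells k l" and "card B = r"
    unfolding boards_def by auto
  define a b c d where "a = lam1 k l B" and "b = lam2 k l B" and "c = lam3 k l B"
    and "d = lam4 k l B"
  have odd_sum: "odd (a + b + c + d)"
    using lam_sum_eq_card[OF \<open>B \<subseteq> cells k l\<close>] \<open>card B = r\<close> \<open>odd r\<close>
    unfolding a_def b_def c_def d_def by simp
  have "B \<in> boards_bar k l r \<longleftrightarrow> canonical_partition a b c d"
    and "reflH k l ` B \<in> boards_bar k l r \<longleftrightarrow> canonical_partition d c b a"
    and "reflV k l ` B \<in> boards_bar k l r \<longleftrightarrow> canonical_partition b a d c"
    and "rot180 k l ` B \<in> boards_bar k l r \<longleftrightarrow> canonical_partition c d a b"
    using B boards_bar_iff HV_group_image_boards[OF _ B]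
      reflH_in_HV_group reflV_in_HV_group rot180_in_HV_group
      lam_reflH[OF \<open>B \<subseteq> cells k l\<close>] lam_reflV[OF \<open>B \<subseteq> cells k l\<close>]
      lam_rot180[OF \<open>B \<subseteq> cells k l\<close>]
    unfolding a_def b_def c_def d_def by simp_all
  then show "\<exists>!B'. B' \<in> boards_bar k l r \<and> board_equiv k l B B'"
    unfolding board_equiv_iff
    using ex_canonical_permutation odd_sum_canonical_permutations_exclusive[OF odd_sum]
    by metis
qed

end
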